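(* Let $K\ge2$, $n\in\mathbb R$, $\sigma>0$, $\tau>0$, $\alpha_i>0$, $\beta_i>0$, $\gamma_i>0$ ($i=1,\dots,K$). Then $$I_n^\sigma(\boldsymbol\alpha,\boldsymbol\gamma)=\tau^{K-1}\Big(\prod_{l=1}^K\beta_l^{\alpha_l}\Big)\int_{S_K}\mathrm d^{K-1}x\,\frac{\big(\sum_{k=1}^K\beta_k^\sigma\gamma_k x_k^{\sigma\tau}\big)^n\prod_{i=1}^K x_i^{\tau\alpha_i-1}}{\big(\sum_{j=1}^K\beta_j x_j^\tau\big)^{\alpha_++\sigma n}}.$$ In particular, $$I_n^\sigma(\boldsymbol\alpha,\boldsymbol\gamma)=\frac{1}{\sigma^{K-1}\prod_{l=1}^K\gamma_l^{\alpha_l/\sigma}}\int_{S_K}\mathrm d^{K-1}x\,\frac{\prod_{i=1}^K x_i^{\alpha_i/\sigma-1}}{\big(\sum_{j=1}^K x_j^{1/\sigma}/\gamma_j^{1/\sigma}\big)^{\alpha_++\sigma n}}.$$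
   Context: $S_K=\{\mathbf x\in\mathbb R^K:\sum_i x_i=1,\ x_i\ge0\}$; $\int_{S_K}\mathrm d^{K-1}x$ denotes the Lebesgue integral in $(x_1,\dots,x_{K-1})$ over $\{x_i\ge0,\sum_{i<K}x_i\le1\}$ with $x_K=1-\sum_{i<K}x_i$. For real $n$, $I_n^\sigma(\boldsymbol\alpha,\boldsymbol\gamma)=\int_{S_K}\mathrm d^{K-1}y\,\big(\sum_k\gamma_k y_k^\sigma\big)^n\prod_i y_i^{\alpha_i-1}$, and $\alpha_+=\sum_i\alpha_i$. *)

theory Defs
  imports "HOL-Analysis.Analysis"
begin

text \<open>Points of the simplex S_K are indexed by 0..K-1. The integral over S_K is the
Lebesgue integral over the first K-1 coordinates y_0..y_(K-2), ranging over
y_i >= 0, sum y_i <= 1, with the last coordinate y_(K-1) = 1 - sum of the others.\<close>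

definition simplex_dom :: "nat \<Rightarrow> (nat \<Rightarrow> real) set" where
  "simplex_dom K = {y. (\<forall>i<K - 1. 0 \<le> y i) \<and> (\<Sum>i<K - 1. y i) \<le> 1}"

definition simplex_pt :: "nat \<Rightarrow> (nat \<Rightarrow> real) \<Rightarrow> (nat \<Rightarrow> real)" where
  "simplex_pt K y = (\<lambda>i. if i < K - 1 then y i else 1 - (\<Sum>j<K - 1. y j))"

definition simplex_integral :: "nat \<Rightarrow> ((nat \<Rightarrow> real) \<Rightarrow> real) \<Rightarrow> real" where
  "simplex_integral K f =
     (LINT y : simplex_dom K | PiM {..<K - 1} (\<lambda>_. lborel). f (simplex_pt K y))"

definition I_int :: "nat \<Rightarrow> real \<Rightarrow> real \<Rightarrow> (nat \<Rightarrow> real) \<Rightarrow> (nat \<Rightarrow> real) \<Rightarrow> real" where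
  "I_int K \<sigma> n \<alpha> \<gamma> = simplex_integral K
     (\<lambda>y. (\<Sum>k<K. \<gamma> k * y k powr \<sigma>) powr n * (\<Prod>i<K. y i powr (\<alpha> i - 1)))"

end

(*
  A nonnegative h that is homogeneous of degree -K on the open orthant can be integrated
  against rho e^(-rho), for any positive rho homogeneous of degree p > 0: in the polar
  coordinates z = r y, with y in the simplex and dz = r^(K-1) dr dy, the radial integral
  of r^(p-1) rho(y) e^(-r^p rho(y)) equals 1/p, so the orthant integral of h rho e^(-rho)
  is (1/p) times the simplex integral of h.

  Extend the integrand f of I_n^sigma to the homogeneous h(z) = f(z) / (sum z)^(alpha_+ + sigma n),
  take rho(z) = sum (z_k / beta_k)^(1/tau), substitute z_k = beta_k x_k^tau coordinatewise
  and apply the same identity backwards with rho(x) = sum x_k: this turns the simplex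
  integral of f into tau^(K-1) prod beta_l^alpha_l times the simplex integral of the
  transformed integrand. The second formula is the case tau = 1/sigma,
  beta_k = gamma_k^(-1/sigma).
*)
theory Submission
  imports Defs
begin

section \<open>One-dimensional substitutions\<close>

lemma nn_integral_indicator_UN_incseq:
  fixes f :: "'a \<Rightarrow> ennreal"
  assumes "incseq A" and [measurable]: "\<And>i. A i \<in> sets M" "f \<in> borel_measurable M"
  shows "(\<integral>\<^sup>+x. f x * indicator (\<Union>i. A i) x \<partial>M) = (SUP i. \<integral>\<^sup>+x. f x * indicator (A i) x \<partial>M)"
proof -
  have incseq_indicator: "incseq (\<lambda>i. f x * indicator (A i) x)" for x
    using \<open>incseq A\<close> by (auto simp: incseq_def split: split_indicator)
  have "indicator (\<Union>i. A i) x = (SUP i. indicator (A i) x :: ennreal)" for x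
    using \<open>incseq A\<close> by (intro LIMSEQ_unique[OF LIMSEQ_indicator_incseq LIMSEQ_SUP])
      (auto simp: incseq_def split: split_indicator)
  then have "(\<integral>\<^sup>+x. f x * indicator (\<Union>i. A i) x \<partial>M) = (\<integral>\<^sup>+x. (SUP i. f x * indicator (A i) x) \<partial>M)"
    by (simp add: SUP_mult_left_ennreal)
  also have "\<dots> = (SUP i. \<integral>\<^sup>+x. f x * indicator (A i) x \<partial>M)"
    using incseq_indicator by (intro nn_integral_monotone_convergence_SUP) (auto simp: incseq_def le_fun_def)
  finally show ?thesis .
qed

lemma incseq_Icc_exhausting_Ioi: "incseq (\<lambda>n. {1 / real (Suc (Suc n)) .. real (Suc (Suc n))})"
  by (intro incseq_SucI) (auto simp: frac_le)

lemma UN_Icc_exhausting_Ioi: "(\<Union>n. {1 / real (Suc (Suc n)) .. real (Suc (Suc n))}) = {0<..}"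
proof (intro equalityI subsetI)
  fix x :: real assume "x \<in> {0<..}"
  then obtain n where "1 / x < real n" "x < real n"
    using reals_Archimedean2[of "max x (1 / x)"] by auto
  with \<open>x \<in> {0<..}\<close> have "x \<in> {1 / real (Suc (Suc n)) .. real (Suc (Suc n))}"
    by (auto simp: field_simps)
  then show "x \<in> (\<Union>n. {1 / real (Suc (Suc n)) .. real (Suc (Suc n))})" by blast
qed (auto intro: less_le_trans[rotated])

lemma nn_integral_powr_substitution:
  fixes f :: "real \<Rightarrow> ennreal" and b t :: real
  assumes b: "b > 0" and t: "t > 0" and [measurable]: "f \<in> borel_measurable borel"
  shows "(\<integral>\<^sup>+x. f x * indicator {0<..} x \<partial>lborel) =
         (\<integral>\<^sup>+x. f (b * x powr t) * ennreal (b * t * x powr (t - 1)) * indicator {0<..} x \<partial>lborel)"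
proof -
  define g where "g x = b * x powr t" for x :: real
  define a where "a n = 1 / real (Suc (Suc n))" for n
  define c where "c n = real (Suc (Suc n))" for n
  have a_pos: "0 < a n" for n by (simp add: a_def)
  have a_less_c: "a n < c n" for n
    using order.strict_trans[of "a n" 1 "c n"] by (simp add: a_def c_def)
  have g_mono: "0 < x \<Longrightarrow> x \<le> y \<Longrightarrow> g x \<le> g y" for x y
    using b t by (simp add: g_def powr_mono2)
  have g_pos: "0 < x \<Longrightarrow> 0 < g x" for x
    using b by (simp add: g_def)
  note a_c_incseq = incseq_Icc_exhausting_Ioi[folded a_def c_def]
    and a_c_UN = UN_Icc_exhausting_Ioi[folded a_def c_def]
  have g_incseq: "incseq (\<lambda>n. {g (a n)..g (c n)})"
  proof (rule incseq_SucI)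
    fix n
    have "g (a (Suc n)) \<le> g (a n)" "g (c n) \<le> g (c (Suc n))"
      by (auto intro!: g_mono simp: a_def c_def frac_le)
    then show "{g (a n)..g (c n)} \<subseteq> {g (a (Suc n))..g (c (Suc n))}" by auto
  qed
  have g_UN: "(\<Union>n. {g (a n)..g (c n)}) = {0<..}"
  proof (intro equalityI subsetI)
    fix x :: real assume "x \<in> {0<..}"
    then have "(x / b) powr (1 / t) \<in> {0<..}" and x_eq: "x = g ((x / b) powr (1 / t))"
      using b t by (auto simp: g_def powr_powr)
    then obtain n where "(x / b) powr (1 / t) \<in> {a n..c n}"
      using a_c_UN by blast
    then have "x \<in> {g (a n)..g (c n)}"
      using a_pos[of n] \<open>(x / b) powr (1 / t) \<in> {0<..}\<close> by (subst x_eq) (auto intro!: g_mono)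
    then show "x \<in> (\<Union>n. {g (a n)..g (c n)})" by blast
  qed (use a_pos g_pos in \<open>auto intro: less_le_trans\<close>)
  have "(\<integral>\<^sup>+x. f x * indicator {0<..} x \<partial>lborel) = (SUP n. \<integral>\<^sup>+x. f x * indicator {g (a n)..g (c n)} x \<partial>lborel)"
    unfolding g_UN[symmetric] by (intro nn_integral_indicator_UN_incseq g_incseq) auto
  also have "\<dots> = (SUP n. \<integral>\<^sup>+x. f (g x) * ennreal (b * t * x powr (t - 1)) * indicator {a n..c n} x \<partial>lborel)"
  proof (intro SUP_cong refl nn_integral_substitution_aux)
    fix n
    show "a n < c n" by (rule a_less_c)
    show "continuous_on {a n..c n} (\<lambda>x. b * t * x powr (t - 1))"
      using a_pos[of n] by (intro continuous_intros) auto
    fix x assume "x \<in> {a n..c n}"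
    then have "0 < x" using a_pos[of n] by auto
    then show "(g has_real_derivative b * t * x powr (t - 1)) (at x)" "0 \<le> b * t * x powr (t - 1)"
      unfolding g_def using b t by (auto intro!: derivative_eq_intros)
  qed auto
  also have "\<dots> = (\<integral>\<^sup>+x. f (g x) * ennreal (b * t * x powr (t - 1)) * indicator {0<..} x \<partial>lborel)"
    unfolding a_c_UN[symmetric] by (intro nn_integral_indicator_UN_incseq[symmetric] a_c_incseq)
      (auto simp: g_def)
  finally show ?thesis by (simp add: g_def)
qed

lemma nn_integral_lborel_powr_substitution:
  fixes f :: "real \<Rightarrow> ennreal" and b t :: real
  assumes b: "b > 0" and t: "t > 0" and f_meas[measurable]: "f \<in> borel_measurable borel"
  shows "(\<integral>\<^sup>+x. f x \<partial>lborel) =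
    (\<integral>\<^sup>+x. f (if 0 < x then b * x powr t else x) *
             (if 0 < x then ennreal (b * t * x powr (t - 1)) else 1) \<partial>lborel)"
proof -
  have "(\<integral>\<^sup>+x. f x \<partial>lborel) = (\<integral>\<^sup>+x. f x * indicator {0<..} x + f x * indicator {..0} x \<partial>lborel)"
    by (intro nn_integral_cong) (auto split: split_indicator)
  also have "\<dots> = (\<integral>\<^sup>+x. f x * indicator {0<..} x \<partial>lborel) + (\<integral>\<^sup>+x. f x * indicator {..0} x \<partial>lborel)"
    by (rule nn_integral_add) measurable
  also have "\<dots> = (\<integral>\<^sup>+x. f (b * x powr t) * ennreal (b * t * x powr (t - 1)) * indicator {0<..} x \<partial>lborel) +
      (\<integral>\<^sup>+x. f x * indicator {..0} x \<partial>lborel)"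
    by (subst nn_integral_powr_substitution[OF b t f_meas]) (rule refl)
  also have "\<dots> = (\<integral>\<^sup>+x. f (b * x powr t) * ennreal (b * t * x powr (t - 1)) * indicator {0<..} x +
      f x * indicator {..0} x \<partial>lborel)"
    by (rule nn_integral_add[symmetric]) measurable
  also have "\<dots> = (\<integral>\<^sup>+x. f (if 0 < x then b * x powr t else x) *
      (if 0 < x then ennreal (b * t * x powr (t - 1)) else 1) \<partial>lborel)"
    by (intro nn_integral_cong) (auto split: split_indicator)
  finally show ?thesis .
qed

lemma nn_integral_exp_minus_Ioi: "(\<integral>\<^sup>+x. ennreal (exp (- x)) * indicator {0<..} x \<partial>lborel) = 1"
proof -
  have "(\<integral>\<^sup>+x. ennreal (exp (- x)) * indicator {0<..} x \<partial>lborel) =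
        (\<integral>\<^sup>+x. ennreal (exp (- x)) * indicator {0..} x \<partial>lborel)"
    using AE_lborel_singleton[of 0] by (intro nn_integral_cong_AE) (auto split: split_indicator)
  also have "\<dots> = ennreal (0 - (- exp (- 0)))"
  proof (rule nn_integral_FTC_atLeast)
    show "((\<lambda>x. - exp (- x)) has_real_derivative exp (- x)) (at x)" for x :: real
      by (auto intro!: derivative_eq_intros)
    have "((\<lambda>x::real. exp (- x)) \<longlongrightarrow> 0) at_top"
      by (rule filterlim_compose[OF exp_at_bot filterlim_uminus_at_bot_at_top])
    then show "((\<lambda>x::real. - exp (- x)) \<longlongrightarrow> 0) at_top"
      using tendsto_minus by fastforce
  qed auto
  finally show ?thesis by simp
qed

lemma nn_integral_powr_exp:
  fixes c p :: real
  assumes c: "c > 0" and p: "p > 0"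
  shows "(\<integral>\<^sup>+r. ennreal (r powr (p - 1) * c * exp (- (c * r powr p))) * indicator {0<..} r \<partial>lborel) =
    ennreal (1 / p)" (is "?I = _")
proof -
  have "ennreal p * ?I =
      (\<integral>\<^sup>+r. ennreal (exp (- (c * r powr p))) * ennreal (c * p * r powr (p - 1)) * indicator {0<..} r \<partial>lborel)"
  proof (subst nn_integral_cmult[symmetric])
    show "(\<integral>\<^sup>+r. ennreal p * (ennreal (r powr (p - 1) * c * exp (- (c * r powr p))) * indicator {0<..} r) \<partial>lborel) =
      (\<integral>\<^sup>+r. ennreal (exp (- (c * r powr p))) * ennreal (c * p * r powr (p - 1)) * indicator {0<..} r \<partial>lborel)"
      using c p by (intro nn_integral_cong) (auto split: split_indicator simp: ennreal_mult'[symmetric] ac_simps)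
  qed simp
  also have "\<dots> = (\<integral>\<^sup>+x. ennreal (exp (- x)) * indicator {0<..} x \<partial>lborel)"
    using c p by (intro nn_integral_powr_substitution[symmetric]) auto
  finally have "ennreal (1 / p) * (ennreal p * ?I) = ennreal (1 / p)"
    by (simp add: nn_integral_exp_minus_Ioi)
  moreover have "ennreal (1 / p) * ennreal p = 1"
    using p by (simp add: ennreal_mult[symmetric])
  ultimately show ?thesis by (simp add: mult.assoc[symmetric])
qed

section \<open>Lebesgue measure on the orthant and on the simplex\<close>

lemma nn_integral_PiM_coordinatewise_substitution:
  fixes I :: "'i set" and T :: "'i \<Rightarrow> real \<Rightarrow> real" and D :: "'i \<Rightarrow> real \<Rightarrow> ennreal"
  assumes "finite I"
    and "\<And>i. i \<in> I \<Longrightarrow> T i \<in> borel_measurable borel"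
    and "\<And>i. i \<in> I \<Longrightarrow> D i \<in> borel_measurable borel"
    and "\<And>i f. i \<in> I \<Longrightarrow> f \<in> borel_measurable borel \<Longrightarrow>
          (\<integral>\<^sup>+x. f x \<partial>lborel) = (\<integral>\<^sup>+x. f (T i x) * D i x \<partial>lborel)"
    and "F \<in> borel_measurable (PiM I (\<lambda>_. lborel))"
  shows "(\<integral>\<^sup>+x. F x \<partial>PiM I (\<lambda>_. lborel)) =
    (\<integral>\<^sup>+x. F (\<lambda>i\<in>I. T i (x i)) * (\<Prod>i\<in>I. D i (x i)) \<partial>PiM I (\<lambda>_. lborel))"
  using assms
proof (induction I arbitrary: F rule: finite_induct)
  case empty
  interpret product_sigma_finite "\<lambda>_. lborel" by standard
  show ?case by (simp add: PiM_empty nn_integral_count_space_finite)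
next
  case (insert i I F)
  interpret product_sigma_finite "\<lambda>_. lborel" by standard
  interpret PI: sigma_finite_measure "PiM I (\<lambda>_. lborel)" using sigma_finite insert by simp
  note [measurable] = insert.prems(4)
  have [measurable]: "T j \<in> borel_measurable borel" "D j \<in> borel_measurable borel"
    if "j \<in> insert i I" for j
    using insert.prems(1,2) that by auto
  have I_eq: "insert i I = I \<union> {i}" by auto
  have T_restrict_meas: "(\<lambda>x. \<lambda>j\<in>J. T j (x j)) \<in> measurable (PiM J (\<lambda>_. lborel)) (PiM J (\<lambda>_. lborel))"
    if "J \<subseteq> insert i I" for J
    using that insert.prems(1) by (intro measurable_restrict) (auto intro: measurable_compose)
  have upd_meas: "(\<lambda>x. (f x)(i := g x)) \<in> measurable N (PiM (insert i I) (\<lambda>_. lborel))"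
    if "f \<in> measurable N (PiM I (\<lambda>_. lborel))" "g \<in> borel_measurable N" for N f g
    using that by (intro measurable_fun_upd[OF I_eq]) auto
  define H where "H y = (\<integral>\<^sup>+x. F ((\<lambda>j\<in>I. T j (x j))(i := y)) * (\<Prod>j\<in>I. D j (x j)) \<partial>PiM I (\<lambda>_. lborel))"
    for y
  have H_meas: "H \<in> borel_measurable borel"
  proof -
    have "(\<lambda>(y, x). (\<lambda>j\<in>I. T j (x j))(i := y)) \<in> measurable (borel \<Otimes>\<^sub>M PiM I (\<lambda>_. lborel)) (PiM (insert i I) (\<lambda>_. lborel))"
      unfolding case_prod_beta
      by (intro upd_meas measurable_compose[OF measurable_snd T_restrict_meas] measurable_fst) auto
    then have "(\<lambda>(y, x). F ((\<lambda>j\<in>I. T j (x j))(i := y)) * (\<Prod>j\<in>I. D j (x j)))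
        \<in> borel_measurable (borel \<Otimes>\<^sub>M PiM I (\<lambda>_. lborel))"
      by measurable
    then show ?thesis unfolding H_def by (rule PI.borel_measurable_nn_integral)
  qed
  have "(\<integral>\<^sup>+x. F x \<partial>PiM (insert i I) (\<lambda>_. lborel)) =
      (\<integral>\<^sup>+y. (\<integral>\<^sup>+x. F (x(i := y)) \<partial>PiM I (\<lambda>_. lborel)) \<partial>lborel)"
    using insert.hyps by (intro product_nn_integral_insert_rev) auto
  also have "\<dots> = (\<integral>\<^sup>+y. H y \<partial>lborel)"
  proof (intro nn_integral_cong)
    fix y :: real
    have "(\<lambda>x. F (x(i := y))) \<in> borel_measurable (PiM I (\<lambda>_. lborel))"
      using upd_meas[OF measurable_ident_sets[OF refl] measurable_const] by measurable
    then show "(\<integral>\<^sup>+x. F (x(i := y)) \<partial>PiM I (\<lambda>_. lborel)) = H y"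
      using insert.IH[of "\<lambda>x. F (x(i := y))"] insert.prems by (auto simp: H_def restrict_def)
  qed
  also have "\<dots> = (\<integral>\<^sup>+y. H (T i y) * D i y \<partial>lborel)"
    using insert.prems(3)[of i H] H_meas by simp
  also have "\<dots> = (\<integral>\<^sup>+y. (\<integral>\<^sup>+x. F (\<lambda>j\<in>insert i I. T j ((x(i := y)) j)) *
        (\<Prod>j\<in>insert i I. D j ((x(i := y)) j)) \<partial>PiM I (\<lambda>_. lborel)) \<partial>lborel)"
  proof (intro nn_integral_cong)
    fix y
    have "(\<lambda>j\<in>insert i I. T j ((x(i := y)) j)) = (\<lambda>j\<in>I. T j (x j))(i := T i y)" for x
      using insert.hyps by (auto simp: fun_eq_iff)
    moreover have "(\<Prod>j\<in>insert i I. D j ((x(i := y)) j)) = D i y * (\<Prod>j\<in>I. D j (x j))" for x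
      using insert.hyps by (auto intro!: arg_cong[where f="(*) (D i y)"] prod.cong)
    moreover have [measurable]: "(\<lambda>x. (\<lambda>j\<in>I. T j (x j))(i := T i y))
        \<in> measurable (PiM I (\<lambda>_. lborel)) (PiM (insert i I) (\<lambda>_. lborel))"
      using T_restrict_meas[of I] by (intro upd_meas) auto
    then have "H (T i y) * D i y =
        (\<integral>\<^sup>+x. F ((\<lambda>j\<in>I. T j (x j))(i := T i y)) * (\<Prod>j\<in>I. D j (x j)) * D i y \<partial>PiM I (\<lambda>_. lborel))"
      unfolding H_def by (intro nn_integral_multc[symmetric]) measurable
    ultimately show "H (T i y) * D i y = (\<integral>\<^sup>+x. F (\<lambda>j\<in>insert i I. T j ((x(i := y)) j)) *
        (\<Prod>j\<in>insert i I. D j ((x(i := y)) j)) \<partial>PiM I (\<lambda>_. lborel))"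
      by (simp add: ac_simps)
  qed
  also have "\<dots> = (\<integral>\<^sup>+x. F (\<lambda>j\<in>insert i I. T j (x j)) * (\<Prod>j\<in>insert i I. D j (x j))
      \<partial>PiM (insert i I) (\<lambda>_. lborel))"
  proof (intro product_nn_integral_insert_rev[symmetric])
    have [measurable]: "(\<lambda>x. \<lambda>j\<in>insert i I. T j (x j))
        \<in> measurable (PiM (insert i I) (\<lambda>_. lborel)) (PiM (insert i I) (\<lambda>_. lborel))"
      by (rule T_restrict_meas) simp
    show "(\<lambda>x. F (\<lambda>j\<in>insert i I. T j (x j)) * (\<Prod>j\<in>insert i I. D j (x j)))
        \<in> borel_measurable (PiM (insert i I) (\<lambda>_. lborel))"
      by measurable
  qed (use insert.hyps in auto)
  finally show ?case .
qed

definition orthant :: "nat \<Rightarrow> (nat \<Rightarrow> real) set" where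
  "orthant K = {z. \<forall>i<K. 0 < z i}"

definition open_simplex_dom :: "nat \<Rightarrow> (nat \<Rightarrow> real) set" where
  "open_simplex_dom K = {y. (\<forall>i<K - 1. 0 < y i) \<and> (\<Sum>i<K - 1. y i) < 1}"

lemma orthant_boundary: "\<forall>i<K. 0 \<le> x i \<Longrightarrow> x \<notin> orthant K \<Longrightarrow> \<exists>j<K. x j = 0"
  by (auto simp: orthant_def le_less)

lemma simplex_pt_in_orthant_iff:
  "simplex_pt (Suc m) y \<in> orthant (Suc m) \<longleftrightarrow> y \<in> open_simplex_dom (Suc m)"
  by (auto simp: orthant_def open_simplex_dom_def simplex_pt_def less_Suc_eq)

lemma open_simplex_dom_subset: "open_simplex_dom K \<subseteq> simplex_dom K"
  by (auto simp: open_simplex_dom_def simplex_dom_def less_imp_le)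

lemma simplex_pt_nonneg: "y \<in> simplex_dom K \<Longrightarrow> 0 \<le> simplex_pt K y i"
  by (auto simp: simplex_dom_def simplex_pt_def)

lemma sum_simplex_pt: "(\<Sum>i<Suc m. simplex_pt (Suc m) y i) = 1"
  by (simp add: simplex_pt_def)

lemma pred_orthant[measurable]: "Measurable.pred (PiM {..<K} (\<lambda>_. lborel)) (\<lambda>z. z \<in> orthant K)"
  unfolding orthant_def by measurable

lemma pred_open_simplex_dom[measurable]:
  "Measurable.pred (PiM {..<m} (\<lambda>_. lborel)) (\<lambda>y. y \<in> open_simplex_dom (Suc m))"
  unfolding open_simplex_dom_def by measurable

lemma pred_simplex_dom[measurable]:
  "Measurable.pred (PiM {..<m} (\<lambda>_. lborel)) (\<lambda>y. y \<in> simplex_dom (Suc m))"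
  unfolding simplex_dom_def by measurable

lemma measurable_scaled_simplex_pt[measurable]:
  "(\<lambda>y. \<lambda>i\<in>{..<Suc m}. c * simplex_pt (Suc m) y i)
    \<in> measurable (PiM {..<m} (\<lambda>_. lborel)) (PiM {..<Suc m} (\<lambda>_. lborel))"
proof (intro measurable_restrict)
  fix i
  show "(\<lambda>y. c * simplex_pt (Suc m) y i) \<in> measurable (PiM {..<m} (\<lambda>_. lborel)) lborel"
    unfolding simplex_pt_def by (cases "i < m") auto
qed

lemma nn_integral_PiM_scale:
  fixes I :: "'i set" and r :: real
  assumes "finite I" and r: "r > 0" and [measurable]: "F \<in> borel_measurable (PiM I (\<lambda>_. lborel))"
  shows "(\<integral>\<^sup>+x. F x \<partial>PiM I (\<lambda>_. lborel)) =
    ennreal (r ^ card I) * (\<integral>\<^sup>+x. F (\<lambda>i\<in>I. r * x i) \<partial>PiM I (\<lambda>_. lborel))"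
proof -
  have "(\<integral>\<^sup>+x. F x \<partial>PiM I (\<lambda>_. lborel)) =
      (\<integral>\<^sup>+x. F (\<lambda>i\<in>I. r * x i) * (\<Prod>i\<in>I. ennreal r) \<partial>PiM I (\<lambda>_. lborel))"
  proof (rule nn_integral_PiM_coordinatewise_substitution)
    fix f :: "real \<Rightarrow> ennreal" assume [measurable]: "f \<in> borel_measurable borel"
    have "(\<integral>\<^sup>+x. f x \<partial>lborel) = ennreal r * (\<integral>\<^sup>+x. f (r * x) \<partial>lborel)"
      using nn_integral_real_affine[of f r 0] r by simp
    also have "\<dots> = (\<integral>\<^sup>+x. f (r * x) * ennreal r \<partial>lborel)"
      by (subst nn_integral_multc) (auto simp: mult.commute)
    finally show "(\<integral>\<^sup>+x. f x \<partial>lborel) = (\<integral>\<^sup>+x. f (r * x) * ennreal r \<partial>lborel)" .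
  qed (use \<open>finite I\<close> in auto)
  also have "\<dots> = ennreal (r ^ card I) * (\<integral>\<^sup>+x. F (\<lambda>i\<in>I. r * x i) \<partial>PiM I (\<lambda>_. lborel))"
    using r by (subst nn_integral_cmult[symmetric])
      (auto simp: ennreal_power mult.commute intro!: measurable_compose[OF measurable_restrict])
  finally show ?thesis .
qed

lemma nn_integral_orthant_slice:
  fixes H :: "(nat \<Rightarrow> real) \<Rightarrow> ennreal" and r :: real
  assumes [measurable]: "H \<in> borel_measurable (PiM {..<Suc m} (\<lambda>_. lborel))" and r: "r > 0"
  shows "(\<integral>\<^sup>+x. (if x \<in> orthant m \<and> (\<Sum>i<m. x i) < r then H (x(m := r - (\<Sum>i<m. x i))) else 0)
      \<partial>PiM {..<m} (\<lambda>_. lborel)) =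
    ennreal (r ^ m) * (\<integral>\<^sup>+y. H (\<lambda>i\<in>{..<Suc m}. r * simplex_pt (Suc m) y i) *
      indicator (open_simplex_dom (Suc m)) y \<partial>PiM {..<m} (\<lambda>_. lborel))"
proof -
  have [measurable]: "(\<lambda>x. x(m := r - (\<Sum>i<m. x i)))
      \<in> measurable (PiM {..<m} (\<lambda>_. lborel)) (PiM {..<Suc m} (\<lambda>_. lborel))"
    by (intro measurable_fun_upd[where J="{..<m}"]) auto
  define Phi where "Phi x = (if x \<in> orthant m \<and> (\<Sum>i<m. x i) < r then H (x(m := r - (\<Sum>i<m. x i))) else 0)"
    for x :: "nat \<Rightarrow> real"
  have "(\<integral>\<^sup>+x. Phi x \<partial>PiM {..<m} (\<lambda>_. lborel)) =
      ennreal (r ^ card {..<m}) * (\<integral>\<^sup>+y. Phi (\<lambda>i\<in>{..<m}. r * y i) \<partial>PiM {..<m} (\<lambda>_. lborel))"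
    unfolding Phi_def by (rule nn_integral_PiM_scale) (use r in auto)
  also have "(\<integral>\<^sup>+y. Phi (\<lambda>i\<in>{..<m}. r * y i) \<partial>PiM {..<m} (\<lambda>_. lborel)) =
      (\<integral>\<^sup>+y. H (\<lambda>i\<in>{..<Suc m}. r * simplex_pt (Suc m) y i) * indicator (open_simplex_dom (Suc m)) y
        \<partial>PiM {..<m} (\<lambda>_. lborel))"
  proof (rule nn_integral_cong)
    fix y :: "nat \<Rightarrow> real"
    have "(\<Sum>i<m. (\<lambda>i\<in>{..<m}. r * y i) i) = r * (\<Sum>i<m. y i)"
      by (simp add: sum_distrib_left)
    moreover have "(\<lambda>i\<in>{..<m}. r * y i)(m := r - r * (\<Sum>i<m. y i)) =
        (\<lambda>i\<in>{..<Suc m}. r * simplex_pt (Suc m) y i)"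
      by (auto simp: fun_eq_iff simplex_pt_def right_diff_distrib)
    ultimately show "Phi (\<lambda>i\<in>{..<m}. r * y i) =
        H (\<lambda>i\<in>{..<Suc m}. r * simplex_pt (Suc m) y i) * indicator (open_simplex_dom (Suc m)) y"
      using r by (auto simp: Phi_def orthant_def open_simplex_dom_def zero_less_mult_iff
          split: split_indicator)
  qed
  finally show ?thesis
    unfolding Phi_def by simp
qed

lemma nn_integral_orthant_radial:
  fixes H :: "(nat \<Rightarrow> real) \<Rightarrow> ennreal"
  assumes [measurable]: "H \<in> borel_measurable (PiM {..<Suc m} (\<lambda>_. lborel))"
  shows "(\<integral>\<^sup>+z. H z * indicator (orthant (Suc m)) z \<partial>PiM {..<Suc m} (\<lambda>_. lborel)) =
    (\<integral>\<^sup>+r. indicator {0<..} r * ennreal (r ^ m) *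
       (\<integral>\<^sup>+y. H (\<lambda>i\<in>{..<Suc m}. r * simplex_pt (Suc m) y i) * indicator (open_simplex_dom (Suc m)) y
          \<partial>PiM {..<m} (\<lambda>_. lborel)) \<partial>lborel)"
proof -
  interpret product_sigma_finite "\<lambda>_. lborel" by standard
  interpret PI: sigma_finite_measure "PiM {..<m} (\<lambda>_. lborel)" by (rule sigma_finite) simp
  interpret PP: pair_sigma_finite "PiM {..<m} (\<lambda>_. lborel)" lborel by standard
  \<comment> \<open>The last coordinate is traded for the radius \<open>r = z\<^sub>0 + \<dots> + z\<^sub>m\<close>.\<close>
  define Phi where "Phi x r = (if x \<in> orthant m \<and> (\<Sum>i<m. x i) < r then H (x(m := r - (\<Sum>i<m. x i))) else 0)"
    for x :: "nat \<Rightarrow> real" and r :: real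
  have [measurable]: "(\<lambda>(x, r). x(m := r - (\<Sum>i<m. x i)))
      \<in> measurable (PiM {..<m} (\<lambda>_. lborel) \<Otimes>\<^sub>M lborel) (PiM {..<Suc m} (\<lambda>_. lborel))"
    unfolding case_prod_beta by (intro measurable_fun_upd[where J="{..<m}"]) auto
  have Phi_meas: "(\<lambda>(x, r). Phi x r) \<in> borel_measurable (PiM {..<m} (\<lambda>_. lborel) \<Otimes>\<^sub>M lborel)"
    unfolding Phi_def by measurable
  have "(\<lambda>z. H z * indicator (orthant (Suc m)) z) \<in> borel_measurable (PiM (insert m {..<m}) (\<lambda>_. lborel))"
    unfolding lessThan_Suc[symmetric] by measurable
  then have "(\<integral>\<^sup>+z. H z * indicator (orthant (Suc m)) z \<partial>PiM {..<Suc m} (\<lambda>_. lborel)) =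
      (\<integral>\<^sup>+x. (\<integral>\<^sup>+t. H (x(m := t)) * indicator (orthant (Suc m)) (x(m := t)) \<partial>lborel) \<partial>PiM {..<m} (\<lambda>_. lborel))"
    unfolding lessThan_Suc by (intro product_nn_integral_insert) auto
  also have "\<dots> = (\<integral>\<^sup>+x. (\<integral>\<^sup>+r. Phi x r \<partial>lborel) \<partial>PiM {..<m} (\<lambda>_. lborel))"
  proof (rule nn_integral_cong)
    fix x :: "nat \<Rightarrow> real" assume x: "x \<in> space (PiM {..<m} (\<lambda>_. lborel))"
    then have [measurable]: "(\<lambda>t. x(m := t)) \<in> measurable lborel (PiM {..<Suc m} (\<lambda>_. lborel))"
      using measurable_component_update[OF x, of m] by (simp add: lessThan_Suc)
    have "(\<integral>\<^sup>+t. H (x(m := t)) * indicator (orthant (Suc m)) (x(m := t)) \<partial>lborel) =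
        ennreal \<bar>1\<bar> * (\<integral>\<^sup>+r. H (x(m := - (\<Sum>i<m. x i) + 1 * r)) *
          indicator (orthant (Suc m)) (x(m := - (\<Sum>i<m. x i) + 1 * r)) \<partial>lborel)"
      by (rule nn_integral_real_affine) auto
    also have "\<dots> = (\<integral>\<^sup>+r. Phi x r \<partial>lborel)"
      by (auto simp: Phi_def orthant_def less_Suc_eq intro!: nn_integral_cong split: split_indicator)
    finally show "(\<integral>\<^sup>+t. H (x(m := t)) * indicator (orthant (Suc m)) (x(m := t)) \<partial>lborel) =
        (\<integral>\<^sup>+r. Phi x r \<partial>lborel)" .
  qed
  also have "\<dots> = (\<integral>\<^sup>+r. (\<integral>\<^sup>+x. Phi x r \<partial>PiM {..<m} (\<lambda>_. lborel)) \<partial>lborel)"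
    by (rule PP.Fubini'[symmetric]) (rule Phi_meas)
  also have "\<dots> = (\<integral>\<^sup>+r. indicator {0<..} r * ennreal (r ^ m) *
       (\<integral>\<^sup>+y. H (\<lambda>i\<in>{..<Suc m}. r * simplex_pt (Suc m) y i) * indicator (open_simplex_dom (Suc m)) y
          \<partial>PiM {..<m} (\<lambda>_. lborel)) \<partial>lborel)"
  proof (rule nn_integral_cong)
    fix r :: real
    have "Phi x r = 0" if "\<not> r > 0" for x
      using that sum_nonneg[of "{..<m}" x] by (auto simp: Phi_def orthant_def less_imp_le)
    then show "(\<integral>\<^sup>+x. Phi x r \<partial>PiM {..<m} (\<lambda>_. lborel)) = indicator {0<..} r * ennreal (r ^ m) *
       (\<integral>\<^sup>+y. H (\<lambda>i\<in>{..<Suc m}. r * simplex_pt (Suc m) y i) * indicator (open_simplex_dom (Suc m)) y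
          \<partial>PiM {..<m} (\<lambda>_. lborel))"
      using nn_integral_orthant_slice[of H m r] by (cases "r > 0") (simp_all add: Phi_def)
  qed
  finally show ?thesis .
qed

section \<open>Homogeneous functions and simplex integrals\<close>

definition depends_on_first :: "nat \<Rightarrow> ((nat \<Rightarrow> real) \<Rightarrow> 'a) \<Rightarrow> bool" where
  "depends_on_first K f \<longleftrightarrow> (\<forall>x y. (\<forall>i<K. x i = y i) \<longrightarrow> f x = f y)"

definition homogeneous_on_orthant :: "nat \<Rightarrow> real \<Rightarrow> ((nat \<Rightarrow> real) \<Rightarrow> real) \<Rightarrow> bool" where
  "homogeneous_on_orthant K d f \<longleftrightarrow> (\<forall>z\<in>orthant K. \<forall>t>0. f (\<lambda>i. t * z i) = t powr d * f z)"

definition simplex_nn_integral :: "nat \<Rightarrow> ((nat \<Rightarrow> real) \<Rightarrow> real) \<Rightarrow> ennreal" where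
  "simplex_nn_integral K f =
     (\<integral>\<^sup>+y. indicator (simplex_dom K) y * ennreal (f (simplex_pt K y)) \<partial>PiM {..<K - 1} (\<lambda>_. lborel))"

lemma depends_on_firstD: "depends_on_first K f \<Longrightarrow> (\<And>i. i < K \<Longrightarrow> x i = y i) \<Longrightarrow> f x = f y"
  unfolding depends_on_first_def by blast

lemma homogeneous_on_orthantD:
  "homogeneous_on_orthant K d f \<Longrightarrow> z \<in> orthant K \<Longrightarrow> t > 0 \<Longrightarrow> f (\<lambda>i. t * z i) = t powr d * f z"
  unfolding homogeneous_on_orthant_def by blast

lemma measurable_comp_simplex_pt:
  assumes "f \<in> borel_measurable (PiM {..<Suc m} (\<lambda>_. lborel))" and "depends_on_first (Suc m) f"
  shows "(\<lambda>y. f (simplex_pt (Suc m) y)) \<in> borel_measurable (PiM {..<m} (\<lambda>_. lborel))"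
proof -
  have "(\<lambda>y. f (simplex_pt (Suc m) y)) = (\<lambda>y. f (\<lambda>i\<in>{..<Suc m}. 1 * simplex_pt (Suc m) y i))"
    by (intro ext depends_on_firstD[OF assms(2)]) auto
  also have "\<dots> \<in> borel_measurable (PiM {..<m} (\<lambda>_. lborel))"
    using assms(1) by measurable
  finally show ?thesis .
qed

lemma simplex_nn_integral_cong:
  assumes "\<And>x. (\<forall>i<Suc m. 0 \<le> x i) \<Longrightarrow> (\<Sum>i<Suc m. x i) = 1 \<Longrightarrow> f x = g x"
  shows "simplex_nn_integral (Suc m) f = simplex_nn_integral (Suc m) g"
  unfolding simplex_nn_integral_def using assms simplex_pt_nonneg sum_simplex_pt
  by (intro nn_integral_cong) (auto split: split_indicator)

lemma simplex_integral_eq_simplex_nn_integral: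
  assumes "(\<lambda>y. f (simplex_pt (Suc m) y)) \<in> borel_measurable (PiM {..<m} (\<lambda>_. lborel))"
    and "\<And>x. 0 \<le> f x"
  shows "simplex_integral (Suc m) f = enn2real (simplex_nn_integral (Suc m) f)"
proof -
  note [measurable] = assms(1)
  have "simplex_integral (Suc m) f = integral\<^sup>L (PiM {..<m} (\<lambda>_. lborel))
      (\<lambda>y. indicator (simplex_dom (Suc m)) y * f (simplex_pt (Suc m) y))"
    unfolding simplex_integral_def set_lebesgue_integral_def by simp
  also have "\<dots> = enn2real (\<integral>\<^sup>+y. ennreal (indicator (simplex_dom (Suc m)) y * f (simplex_pt (Suc m) y))
      \<partial>PiM {..<m} (\<lambda>_. lborel))"
    by (rule integral_eq_nn_integral) (measurable, use assms(2) in \<open>auto split: split_indicator\<close>)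
  also have "\<dots> = enn2real (simplex_nn_integral (Suc m) f)"
    unfolding simplex_nn_integral_def by (auto intro!: arg_cong[where f=enn2real] nn_integral_cong
        split: split_indicator)
  finally show ?thesis .
qed

lemma simplex_integral_cong:
  assumes "\<And>x. (\<forall>i<Suc m. 0 \<le> x i) \<Longrightarrow> (\<Sum>i<Suc m. x i) = 1 \<Longrightarrow> f x = g x"
  shows "simplex_integral (Suc m) f = simplex_integral (Suc m) g"
  unfolding simplex_integral_def set_lebesgue_integral_def using assms simplex_pt_nonneg sum_simplex_pt
  by (intro Bochner_Integration.integral_cong) (auto split: split_indicator)

lemma simplex_nn_integral_cmult:
  assumes "0 \<le> c" and [measurable]: "(\<lambda>y. f (simplex_pt (Suc m) y)) \<in> borel_measurable (PiM {..<m} (\<lambda>_. lborel))"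
  shows "simplex_nn_integral (Suc m) (\<lambda>x. c * f x) = ennreal c * simplex_nn_integral (Suc m) f"
proof -
  have "simplex_nn_integral (Suc m) (\<lambda>x. c * f x) =
      (\<integral>\<^sup>+y. ennreal c * (indicator (simplex_dom (Suc m)) y * ennreal (f (simplex_pt (Suc m) y)))
        \<partial>PiM {..<m} (\<lambda>_. lborel))"
    unfolding simplex_nn_integral_def using assms(1)
    by (auto intro!: nn_integral_cong simp: ennreal_mult' ac_simps)
  also have "\<dots> = ennreal c * simplex_nn_integral (Suc m) f"
    unfolding simplex_nn_integral_def by (simp, rule nn_integral_cmult) measurable
  finally show ?thesis .
qed

lemma homogeneous_radial_identity:
  fixes h \<rho> :: "(nat \<Rightarrow> real) \<Rightarrow> real"
  assumes h_local: "depends_on_first (Suc m) h" and \<rho>_local: "depends_on_first (Suc m) \<rho>"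
    and h_hom: "homogeneous_on_orthant (Suc m) (- real (Suc m)) h"
    and \<rho>_hom: "homogeneous_on_orthant (Suc m) p \<rho>"
    and h_nonneg: "0 \<le> h z" and z: "z \<in> orthant (Suc m)" and r: "r > 0"
  shows "ennreal (r ^ m) * ennreal (h (\<lambda>i\<in>{..<Suc m}. r * z i) * \<rho> (\<lambda>i\<in>{..<Suc m}. r * z i) *
      exp (- \<rho> (\<lambda>i\<in>{..<Suc m}. r * z i))) =
    ennreal (h z) * ennreal (r powr (p - 1) * \<rho> z * exp (- (\<rho> z * r powr p)))"
proof -
  have "r ^ m * r powr (- real (Suc m)) * r powr p = r powr (real m + - real (Suc m) + p)"
    using r by (simp only: powr_realpow[symmetric] powr_add)
  also have "real m + - real (Suc m) + p = p - 1"
    by simp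
  finally have r_powers: "r ^ m * r powr (- real (Suc m)) * r powr p = r powr (p - 1)" .
  have "h (\<lambda>i\<in>{..<Suc m}. r * z i) = h (\<lambda>i. r * z i)" "\<rho> (\<lambda>i\<in>{..<Suc m}. r * z i) = \<rho> (\<lambda>i. r * z i)"
    by (rule depends_on_firstD[OF h_local], simp, rule depends_on_firstD[OF \<rho>_local], simp)
  then have "r ^ m * (h (\<lambda>i\<in>{..<Suc m}. r * z i) * \<rho> (\<lambda>i\<in>{..<Suc m}. r * z i) *
      exp (- \<rho> (\<lambda>i\<in>{..<Suc m}. r * z i))) =
      (r ^ m * r powr (- real (Suc m)) * r powr p) * (h z * (\<rho> z * exp (- (\<rho> z * r powr p))))"
    unfolding homogeneous_on_orthantD[OF h_hom z r] homogeneous_on_orthantD[OF \<rho>_hom z r]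
    by (simp only: ac_simps)
  also have "\<dots> = h z * (r powr (p - 1) * \<rho> z * exp (- (\<rho> z * r powr p)))"
    unfolding r_powers by (simp only: ac_simps)
  finally show ?thesis
    using r h_nonneg by (simp add: ennreal_mult'[symmetric])
qed

lemma nn_integral_homogeneous_exp:
  fixes h \<rho> :: "(nat \<Rightarrow> real) \<Rightarrow> real" and p :: real
  assumes h_meas[measurable]: "h \<in> borel_measurable (PiM {..<Suc m} (\<lambda>_. lborel))"
    and \<rho>_meas[measurable]: "\<rho> \<in> borel_measurable (PiM {..<Suc m} (\<lambda>_. lborel))"
    and h_local: "depends_on_first (Suc m) h" and \<rho>_local: "depends_on_first (Suc m) \<rho>"
    and h_hom: "homogeneous_on_orthant (Suc m) (- real (Suc m)) h"
    and \<rho>_hom: "homogeneous_on_orthant (Suc m) p \<rho>"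
    and h_zero: "\<And>z. z \<notin> orthant (Suc m) \<Longrightarrow> h z = 0"
    and h_nonneg: "\<And>z. 0 \<le> h z"
    and \<rho>_pos: "\<And>z. z \<in> orthant (Suc m) \<Longrightarrow> 0 < \<rho> z"
    and p: "0 < p"
  shows "(\<integral>\<^sup>+z. ennreal (h z * \<rho> z * exp (- \<rho> z)) \<partial>PiM {..<Suc m} (\<lambda>_. lborel)) =
    ennreal (1 / p) * simplex_nn_integral (Suc m) h"
proof -
  interpret product_sigma_finite "\<lambda>_. lborel" by standard
  interpret PI: sigma_finite_measure "PiM {..<m} (\<lambda>_. lborel)" by (rule sigma_finite) simp
  interpret PP: pair_sigma_finite "PiM {..<m} (\<lambda>_. lborel)" lborel by standard
  let ?pt = "simplex_pt (Suc m)" and ?S = "open_simplex_dom (Suc m)"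
  define H where "H z = ennreal (h z * \<rho> z * exp (- \<rho> z))" for z
  define Psi where "Psi y r = indicator ?S y * ennreal (h (?pt y)) *
      (ennreal (r powr (p - 1) * \<rho> (?pt y) * exp (- (\<rho> (?pt y) * r powr p))) * indicator {0<..} r)"
    for y and r :: real
  note [measurable] = measurable_comp_simplex_pt[OF h_meas h_local]
    measurable_comp_simplex_pt[OF \<rho>_meas \<rho>_local]
  have Psi_meas: "(\<lambda>(y, r). Psi y r) \<in> borel_measurable (PiM {..<m} (\<lambda>_. lborel) \<Otimes>\<^sub>M lborel)"
    unfolding Psi_def by measurable
  have radial_integrand: "ennreal (r ^ m) * H (\<lambda>i\<in>{..<Suc m}. r * ?pt y i) = Psi y r"
    if "r > 0" and "y \<in> ?S" for r y
    using that h_nonneg simplex_pt_in_orthant_iff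
    by (simp add: H_def Psi_def homogeneous_radial_identity[OF h_local \<rho>_local h_hom \<rho>_hom])
  have "(\<integral>\<^sup>+z. ennreal (h z * \<rho> z * exp (- \<rho> z)) \<partial>PiM {..<Suc m} (\<lambda>_. lborel)) =
      (\<integral>\<^sup>+z. H z * indicator (orthant (Suc m)) z \<partial>PiM {..<Suc m} (\<lambda>_. lborel))"
    unfolding H_def using h_zero by (intro nn_integral_cong) (auto split: split_indicator)
  also have "\<dots> = (\<integral>\<^sup>+r. indicator {0<..} r * ennreal (r ^ m) *
       (\<integral>\<^sup>+y. H (\<lambda>i\<in>{..<Suc m}. r * ?pt y i) * indicator ?S y \<partial>PiM {..<m} (\<lambda>_. lborel)) \<partial>lborel)"
    unfolding H_def by (rule nn_integral_orthant_radial) measurable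
  also have "\<dots> = (\<integral>\<^sup>+r. (\<integral>\<^sup>+y. Psi y r \<partial>PiM {..<m} (\<lambda>_. lborel)) \<partial>lborel)"
  proof (rule nn_integral_cong)
    fix r :: real
    have "indicator {0<..} r * ennreal (r ^ m) *
        (\<integral>\<^sup>+y. H (\<lambda>i\<in>{..<Suc m}. r * ?pt y i) * indicator ?S y \<partial>PiM {..<m} (\<lambda>_. lborel)) =
        (\<integral>\<^sup>+y. indicator {0<..} r * (ennreal (r ^ m) * H (\<lambda>i\<in>{..<Suc m}. r * ?pt y i)) * indicator ?S y
          \<partial>PiM {..<m} (\<lambda>_. lborel))"
      unfolding H_def by (subst nn_integral_cmult[symmetric]) (measurable, rule nn_integral_cong, simp add: ac_simps)
    also have "\<dots> = (\<integral>\<^sup>+y. Psi y r \<partial>PiM {..<m} (\<lambda>_. lborel))"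
      using radial_integrand by (intro nn_integral_cong) (auto simp: Psi_def split: split_indicator)
    finally show "indicator {0<..} r * ennreal (r ^ m) *
        (\<integral>\<^sup>+y. H (\<lambda>i\<in>{..<Suc m}. r * ?pt y i) * indicator ?S y \<partial>PiM {..<m} (\<lambda>_. lborel)) =
        (\<integral>\<^sup>+y. Psi y r \<partial>PiM {..<m} (\<lambda>_. lborel))" .
  qed
  also have "\<dots> = (\<integral>\<^sup>+y. (\<integral>\<^sup>+r. Psi y r \<partial>lborel) \<partial>PiM {..<m} (\<lambda>_. lborel))"
    by (rule PP.Fubini'[OF Psi_meas])
  also have "\<dots> = (\<integral>\<^sup>+y. ennreal (1 / p) * (indicator ?S y * ennreal (h (?pt y))) \<partial>PiM {..<m} (\<lambda>_. lborel))"
  proof (rule nn_integral_cong)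
    fix y
    have "(\<integral>\<^sup>+r. Psi y r \<partial>lborel) = indicator ?S y * ennreal (h (?pt y)) *
        (\<integral>\<^sup>+r. ennreal (r powr (p - 1) * \<rho> (?pt y) * exp (- (\<rho> (?pt y) * r powr p))) * indicator {0<..} r \<partial>lborel)"
      unfolding Psi_def by (rule nn_integral_cmult) measurable
    also have "\<dots> = ennreal (1 / p) * (indicator ?S y * ennreal (h (?pt y)))"
    proof (cases "y \<in> ?S")
      case True
      then have "?pt y \<in> orthant (Suc m)"
        using simplex_pt_in_orthant_iff by blast
      then show ?thesis
        using True by (simp only: nn_integral_powr_exp[OF \<rho>_pos p]) (simp add: mult.commute)
    qed simp
    finally show "(\<integral>\<^sup>+r. Psi y r \<partial>lborel) = ennreal (1 / p) * (indicator ?S y * ennreal (h (?pt y)))" .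
  qed
  also have "\<dots> = ennreal (1 / p) * (\<integral>\<^sup>+y. indicator ?S y * ennreal (h (?pt y)) \<partial>PiM {..<m} (\<lambda>_. lborel))"
    by (rule nn_integral_cmult) measurable
  also have "(\<integral>\<^sup>+y. indicator ?S y * ennreal (h (?pt y)) \<partial>PiM {..<m} (\<lambda>_. lborel)) =
      simplex_nn_integral (Suc m) h"
    unfolding simplex_nn_integral_def
    using open_simplex_dom_subset[of "Suc m"] simplex_pt_in_orthant_iff h_zero
    by (auto intro!: nn_integral_cong split: split_indicator)
  finally show ?thesis .
qed

text \<open>The substitution \<open>z\<^sub>i = \<beta>\<^sub>i x\<^sub>i powr \<tau>\<close>, extended by the identity to \<open>x\<^sub>i \<le> 0\<close> so that
  it can be performed coordinatewise on all of the real line.\<close>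

definition powr_subst :: "real \<Rightarrow> (nat \<Rightarrow> real) \<Rightarrow> (nat \<Rightarrow> real) \<Rightarrow> (nat \<Rightarrow> real)" where
  "powr_subst \<tau> \<beta> x = (\<lambda>i. if 0 < x i then \<beta> i * x i powr \<tau> else x i)"

definition powr_subst_jacobian :: "nat \<Rightarrow> real \<Rightarrow> (nat \<Rightarrow> real) \<Rightarrow> (nat \<Rightarrow> real) \<Rightarrow> real" where
  "powr_subst_jacobian K \<tau> \<beta> x = (\<Prod>i<K. if 0 < x i then \<beta> i * \<tau> * x i powr (\<tau> - 1) else 1)"

definition orthant_gauge :: "nat \<Rightarrow> real \<Rightarrow> (nat \<Rightarrow> real) \<Rightarrow> (nat \<Rightarrow> real) \<Rightarrow> real" where
  "orthant_gauge K \<tau> \<beta> z = (\<Sum>k<K. (z k / \<beta> k) powr (1 / \<tau>))"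

lemma measurable_powr_subst[measurable]:
  "(\<lambda>x. restrict (powr_subst \<tau> \<beta> x) {..<K})
    \<in> measurable (PiM {..<K} (\<lambda>_. lborel)) (PiM {..<K} (\<lambda>_. lborel))"
  unfolding powr_subst_def by (intro measurable_restrict) auto

lemma powr_subst_jacobian_pos: "(\<And>i. i < K \<Longrightarrow> 0 < \<beta> i) \<Longrightarrow> 0 < \<tau> \<Longrightarrow> 0 < powr_subst_jacobian K \<tau> \<beta> x"
  unfolding powr_subst_jacobian_def by (intro prod_pos) auto

lemma powr_subst_in_orthant_iff:
  "(\<And>i. i < K \<Longrightarrow> 0 < \<beta> i) \<Longrightarrow> powr_subst \<tau> \<beta> x \<in> orthant K \<longleftrightarrow> x \<in> orthant K"
  by (auto simp: powr_subst_def orthant_def)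

lemma nn_integral_PiM_powr_subst:
  assumes \<beta>: "\<And>i. i < K \<Longrightarrow> 0 < \<beta> i" and \<tau>: "0 < \<tau>"
    and [measurable]: "F \<in> borel_measurable (PiM {..<K} (\<lambda>_. lborel))"
  shows "(\<integral>\<^sup>+z. F z \<partial>PiM {..<K} (\<lambda>_. lborel)) =
    (\<integral>\<^sup>+x. F (restrict (powr_subst \<tau> \<beta> x) {..<K}) * ennreal (powr_subst_jacobian K \<tau> \<beta> x)
      \<partial>PiM {..<K} (\<lambda>_. lborel))"
proof -
  define T where "T i u = (if 0 < u then \<beta> i * u powr \<tau> else u)" for i u
  define D where "D i u = (if 0 < u then ennreal (\<beta> i * \<tau> * u powr (\<tau> - 1)) else 1)" for i u
  have "(\<integral>\<^sup>+z. F z \<partial>PiM {..<K} (\<lambda>_. lborel)) =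
      (\<integral>\<^sup>+x. F (\<lambda>i\<in>{..<K}. T i (x i)) * (\<Prod>i\<in>{..<K}. D i (x i)) \<partial>PiM {..<K} (\<lambda>_. lborel))"
  proof (rule nn_integral_PiM_coordinatewise_substitution)
    fix i and f :: "real \<Rightarrow> ennreal"
    assume "i \<in> {..<K}" and "f \<in> borel_measurable borel"
    then show "(\<integral>\<^sup>+x. f x \<partial>lborel) = (\<integral>\<^sup>+x. f (T i x) * D i x \<partial>lborel)"
      unfolding T_def D_def using \<beta> \<tau> by (intro nn_integral_lborel_powr_substitution) auto
  qed (auto simp: T_def D_def)
  also have "\<dots> = (\<integral>\<^sup>+x. F (restrict (powr_subst \<tau> \<beta> x) {..<K}) * ennreal (powr_subst_jacobian K \<tau> \<beta> x)
      \<partial>PiM {..<K} (\<lambda>_. lborel))"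
  proof (rule nn_integral_cong)
    fix x :: "nat \<Rightarrow> real"
    have "(\<Prod>i\<in>{..<K}. D i (x i)) = ennreal (powr_subst_jacobian K \<tau> \<beta> x)"
      unfolding D_def powr_subst_jacobian_def using \<beta> \<tau>
      by (subst prod_ennreal[symmetric]) (auto intro!: prod.cong less_imp_le)
    moreover have "(\<lambda>i\<in>{..<K}. T i (x i)) = restrict (powr_subst \<tau> \<beta> x) {..<K}"
      by (simp add: T_def powr_subst_def)
    ultimately show "F (\<lambda>i\<in>{..<K}. T i (x i)) * (\<Prod>i\<in>{..<K}. D i (x i)) =
        F (restrict (powr_subst \<tau> \<beta> x) {..<K}) * ennreal (powr_subst_jacobian K \<tau> \<beta> x)"
      by simp
  qed
  finally show ?thesis .
qed

lemma homogeneous_on_orthant_powr_subst: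
  assumes h_local: "depends_on_first K h" and h_hom: "homogeneous_on_orthant K (- real K) h"
    and \<beta>: "\<And>i. i < K \<Longrightarrow> 0 < \<beta> i"
  shows "homogeneous_on_orthant K (- real K) (\<lambda>x. h (powr_subst \<tau> \<beta> x) * powr_subst_jacobian K \<tau> \<beta> x)"
  unfolding homogeneous_on_orthant_def
proof (intro ballI allI impI)
  fix x and t :: real assume x: "x \<in> orthant K" and t: "0 < t"
  then have x_pos: "0 < x i" if "i < K" for i
    using that by (simp add: orthant_def)
  have "h (powr_subst \<tau> \<beta> (\<lambda>i. t * x i)) = h (\<lambda>i. t powr \<tau> * powr_subst \<tau> \<beta> x i)"
    using x_pos t by (intro depends_on_firstD[OF h_local]) (simp add: powr_subst_def powr_mult)
  also have "\<dots> = (t powr \<tau>) powr (- real K) * h (powr_subst \<tau> \<beta> x)"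
    using homogeneous_on_orthantD[OF h_hom] x t powr_subst_in_orthant_iff[OF \<beta>] by simp
  finally have h_part: "h (powr_subst \<tau> \<beta> (\<lambda>i. t * x i)) = t powr (\<tau> * - real K) * h (powr_subst \<tau> \<beta> x)"
    by (simp only: powr_powr)
  have "powr_subst_jacobian K \<tau> \<beta> (\<lambda>i. t * x i) =
      (\<Prod>i<K. t powr (\<tau> - 1) * (\<beta> i * \<tau> * x i powr (\<tau> - 1)))"
    unfolding powr_subst_jacobian_def using x_pos t by (intro prod.cong) (auto simp: powr_mult)
  also have "\<dots> = (\<Prod>i<K. t powr (\<tau> - 1)) * powr_subst_jacobian K \<tau> \<beta> x"
    unfolding powr_subst_jacobian_def prod.distrib[symmetric] using x_pos by (intro prod.cong) auto
  also have "(\<Prod>i<K. t powr (\<tau> - 1)) = t powr ((\<tau> - 1) * real K)"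
    using t by (simp add: powr_powr flip: powr_realpow)
  finally have J_part: "powr_subst_jacobian K \<tau> \<beta> (\<lambda>i. t * x i) =
      t powr ((\<tau> - 1) * real K) * powr_subst_jacobian K \<tau> \<beta> x" .
  have "\<tau> * - real K + (\<tau> - 1) * real K = - real K"
    by (simp add: algebra_simps)
  then have exponent: "t powr (\<tau> * - real K) * t powr ((\<tau> - 1) * real K) = t powr (- real K)"
    by (simp only: powr_add[symmetric])
  show "h (powr_subst \<tau> \<beta> (\<lambda>i. t * x i)) * powr_subst_jacobian K \<tau> \<beta> (\<lambda>i. t * x i) =
      t powr (- real K) * (h (powr_subst \<tau> \<beta> x) * powr_subst_jacobian K \<tau> \<beta> x)"
    unfolding h_part J_part exponent[symmetric] by (simp only: ac_simps)
qed

lemma orthant_gauge_measurable[measurable]: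
  "orthant_gauge K \<tau> \<beta> \<in> borel_measurable (PiM {..<K} (\<lambda>_. lborel))"
  unfolding orthant_gauge_def by measurable

lemma depends_on_first_orthant_gauge: "depends_on_first K (orthant_gauge K \<tau> \<beta>)"
  unfolding depends_on_first_def orthant_gauge_def by (auto intro!: sum.cong)

lemma orthant_gauge_pos:
  "(\<And>i. i < K \<Longrightarrow> 0 < \<beta> i) \<Longrightarrow> z \<in> orthant K \<Longrightarrow> 0 < K \<Longrightarrow> 0 < orthant_gauge K \<tau> \<beta> z"
  unfolding orthant_gauge_def by (intro sum_pos) (auto simp: orthant_def less_imp_neq[symmetric])

lemma homogeneous_on_orthant_orthant_gauge:
  assumes \<beta>: "\<And>i. i < K \<Longrightarrow> 0 < \<beta> i"
  shows "homogeneous_on_orthant K (1 / \<tau>) (orthant_gauge K \<tau> \<beta>)"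
  unfolding homogeneous_on_orthant_def
proof (intro ballI allI impI)
  fix z and t :: real assume "z \<in> orthant K" "0 < t"
  then have "(t * z k / \<beta> k) powr (1 / \<tau>) = t powr (1 / \<tau>) * (z k / \<beta> k) powr (1 / \<tau>)"
    if "k < K" for k
    using \<beta>[OF that] that by (simp add: orthant_def powr_mult[symmetric])
  then show "orthant_gauge K \<tau> \<beta> (\<lambda>i. t * z i) = t powr (1 / \<tau>) * orthant_gauge K \<tau> \<beta> z"
    unfolding orthant_gauge_def sum_distrib_left by (intro sum.cong) auto
qed

lemma orthant_gauge_powr_subst:
  assumes "x \<in> orthant K" and \<beta>: "\<And>i. i < K \<Longrightarrow> 0 < \<beta> i" and \<tau>: "0 < \<tau>"
  shows "orthant_gauge K \<tau> \<beta> (powr_subst \<tau> \<beta> x) = orthant_gauge K 1 (\<lambda>_. 1) x"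
  unfolding orthant_gauge_def
proof (rule sum.cong[OF refl])
  fix k assume "k \<in> {..<K}"
  then have "0 < x k" "0 < \<beta> k"
    using assms(1) \<beta> by (auto simp: orthant_def)
  then show "(powr_subst \<tau> \<beta> x k / \<beta> k) powr (1 / \<tau>) = (x k / 1) powr (1 / 1)"
    using \<tau> by (simp add: powr_subst_def powr_powr)
qed


lemma simplex_nn_integral_powr_substitution:
  fixes h :: "(nat \<Rightarrow> real) \<Rightarrow> real" and \<tau> :: real and \<beta> :: "nat \<Rightarrow> real"
  assumes h_meas[measurable]: "h \<in> borel_measurable (PiM {..<Suc m} (\<lambda>_. lborel))"
    and h_local: "depends_on_first (Suc m) h"
    and h_hom: "homogeneous_on_orthant (Suc m) (- real (Suc m)) h"
    and h_zero: "\<And>z. z \<notin> orthant (Suc m) \<Longrightarrow> h z = 0"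
    and h_nonneg: "\<And>z. 0 \<le> h z"
    and \<tau>: "0 < \<tau>" and \<beta>: "\<And>i. i < Suc m \<Longrightarrow> 0 < \<beta> i"
  shows "ennreal \<tau> * simplex_nn_integral (Suc m) h =
    simplex_nn_integral (Suc m) (\<lambda>x. h (\<lambda>i. \<beta> i * x i powr \<tau>) * (\<Prod>i<Suc m. \<beta> i * \<tau> * x i powr (\<tau> - 1)))"
proof -
  let ?\<rho> = "orthant_gauge (Suc m) \<tau> \<beta>" and ?\<rho>\<^sub>1 = "orthant_gauge (Suc m) 1 (\<lambda>_. 1)"
  define g where "g x = h (powr_subst \<tau> \<beta> x) * powr_subst_jacobian (Suc m) \<tau> \<beta> x" for x
  have h_restrict: "h (restrict (powr_subst \<tau> \<beta> x) {..<Suc m}) = h (powr_subst \<tau> \<beta> x)" for x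
    by (rule depends_on_firstD[OF h_local]) simp
  have [measurable]: "g \<in> borel_measurable (PiM {..<Suc m} (\<lambda>_. lborel))"
    unfolding g_def h_restrict[symmetric] powr_subst_jacobian_def by measurable
  have g_local: "depends_on_first (Suc m) g"
    unfolding depends_on_first_def g_def powr_subst_jacobian_def
    by (auto intro!: arg_cong2[where f="(*)"] depends_on_firstD[OF h_local] prod.cong
        simp: powr_subst_def)
  have g_zero: "g x = 0" if "x \<notin> orthant (Suc m)" for x
    using that h_zero powr_subst_in_orthant_iff[OF \<beta>] by (simp add: g_def)
  have g_nonneg: "0 \<le> g x" for x
    unfolding g_def using h_nonneg powr_subst_jacobian_pos[OF \<beta> \<tau>] by (simp add: less_imp_le)
  have "ennreal \<tau> * simplex_nn_integral (Suc m) h = ennreal (1 / (1 / \<tau>)) * simplex_nn_integral (Suc m) h"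
    by simp
  also have "\<dots> = (\<integral>\<^sup>+z. ennreal (h z * ?\<rho> z * exp (- ?\<rho> z)) \<partial>PiM {..<Suc m} (\<lambda>_. lborel))"
    using h_local h_hom h_zero h_nonneg \<tau> \<beta> orthant_gauge_pos[OF \<beta>]
    by (intro nn_integral_homogeneous_exp[symmetric] depends_on_first_orthant_gauge
        homogeneous_on_orthant_orthant_gauge) auto
  also have "\<dots> = (\<integral>\<^sup>+x. ennreal (h (restrict (powr_subst \<tau> \<beta> x) {..<Suc m}) *
      ?\<rho> (restrict (powr_subst \<tau> \<beta> x) {..<Suc m}) * exp (- ?\<rho> (restrict (powr_subst \<tau> \<beta> x) {..<Suc m}))) *
      ennreal (powr_subst_jacobian (Suc m) \<tau> \<beta> x) \<partial>PiM {..<Suc m} (\<lambda>_. lborel))"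
    using \<beta> \<tau> by (intro nn_integral_PiM_powr_subst) auto
  also have "\<dots> = (\<integral>\<^sup>+x. ennreal (g x * ?\<rho>\<^sub>1 x * exp (- ?\<rho>\<^sub>1 x)) \<partial>PiM {..<Suc m} (\<lambda>_. lborel))"
  proof (rule nn_integral_cong)
    fix x :: "nat \<Rightarrow> real"
    have "?\<rho> (restrict (powr_subst \<tau> \<beta> x) {..<Suc m}) = ?\<rho> (powr_subst \<tau> \<beta> x)"
      by (rule depends_on_firstD[OF depends_on_first_orthant_gauge]) simp
    moreover have "?\<rho> (powr_subst \<tau> \<beta> x) = ?\<rho>\<^sub>1 x" if "x \<in> orthant (Suc m)"
      using that \<beta> \<tau> by (rule orthant_gauge_powr_subst)
    ultimately show "ennreal (h (restrict (powr_subst \<tau> \<beta> x) {..<Suc m}) *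
        ?\<rho> (restrict (powr_subst \<tau> \<beta> x) {..<Suc m}) * exp (- ?\<rho> (restrict (powr_subst \<tau> \<beta> x) {..<Suc m}))) *
        ennreal (powr_subst_jacobian (Suc m) \<tau> \<beta> x) = ennreal (g x * ?\<rho>\<^sub>1 x * exp (- ?\<rho>\<^sub>1 x))"
      using g_zero h_zero powr_subst_in_orthant_iff[of "Suc m" \<beta> \<tau> x] \<beta>
        powr_subst_jacobian_pos[of "Suc m" \<beta> \<tau> x] \<tau>
      by (cases "x \<in> orthant (Suc m)") (simp_all add: h_restrict g_def ennreal_mult'[symmetric] ac_simps)
  qed
  also have "\<dots> = ennreal (1 / 1) * simplex_nn_integral (Suc m) g"
  proof (rule nn_integral_homogeneous_exp)
    show "homogeneous_on_orthant (Suc m) (- real (Suc m)) g"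
      unfolding g_def by (rule homogeneous_on_orthant_powr_subst[OF h_local h_hom]) (use \<beta> in auto)
    show "homogeneous_on_orthant (Suc m) 1 ?\<rho>\<^sub>1"
      using homogeneous_on_orthant_orthant_gauge[of "Suc m" "\<lambda>_. 1" 1] by simp
  qed (use g_local g_zero g_nonneg orthant_gauge_pos[of "Suc m" "\<lambda>_. 1"] depends_on_first_orthant_gauge in auto)
  also have "\<dots> = simplex_nn_integral (Suc m) g"
    by simp
  also have "\<dots> = simplex_nn_integral (Suc m) (\<lambda>x. h (\<lambda>i. \<beta> i * x i powr \<tau>) * (\<Prod>i<Suc m. \<beta> i * \<tau> * x i powr (\<tau> - 1)))"
  proof (rule simplex_nn_integral_cong)
    fix x :: "nat \<Rightarrow> real" assume x: "\<forall>i<Suc m. 0 \<le> x i"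
    show "g x = h (\<lambda>i. \<beta> i * x i powr \<tau>) * (\<Prod>i<Suc m. \<beta> i * \<tau> * x i powr (\<tau> - 1))"
    proof (cases "x \<in> orthant (Suc m)")
      case True
      then have "h (powr_subst \<tau> \<beta> x) = h (\<lambda>i. \<beta> i * x i powr \<tau>)"
        by (intro depends_on_firstD[OF h_local]) (simp add: powr_subst_def orthant_def)
      moreover have "powr_subst_jacobian (Suc m) \<tau> \<beta> x = (\<Prod>i<Suc m. \<beta> i * \<tau> * x i powr (\<tau> - 1))"
        unfolding powr_subst_jacobian_def using True by (intro prod.cong) (auto simp: orthant_def)
      ultimately show ?thesis
        by (simp add: g_def)
    next
      case False
      then obtain j where "j < Suc m" "x j = 0"
        using x orthant_boundary by blast
      then have "(\<lambda>i. \<beta> i * x i powr \<tau>) \<notin> orthant (Suc m)"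
        by (auto simp: orthant_def)
      then show ?thesis
        using False g_zero h_zero by simp
    qed
  qed
  finally show ?thesis .
qed

definition homogeneous_extension :: "nat \<Rightarrow> real \<Rightarrow> ((nat \<Rightarrow> real) \<Rightarrow> real) \<Rightarrow> (nat \<Rightarrow> real) \<Rightarrow> real" where
  "homogeneous_extension K d f z = (if z \<in> orthant K then f z / (\<Sum>j<K. z j) powr d else 0)"

lemma homogeneous_extension_measurable:
  assumes [measurable]: "f \<in> borel_measurable (PiM {..<K} (\<lambda>_. lborel))"
  shows "homogeneous_extension K d f \<in> borel_measurable (PiM {..<K} (\<lambda>_. lborel))"
  unfolding homogeneous_extension_def by measurable

lemma depends_on_first_homogeneous_extension:
  assumes f: "depends_on_first K f"
  shows "depends_on_first K (homogeneous_extension K d f)"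
proof (unfold depends_on_first_def, intro allI impI)
  fix x y :: "nat \<Rightarrow> real"
  assume "\<forall>i<K. x i = y i"
  then have "x \<in> orthant K \<longleftrightarrow> y \<in> orthant K" "(\<Sum>j<K. x j) = (\<Sum>j<K. y j)" "f x = f y"
    by (auto simp: orthant_def intro: sum.cong depends_on_firstD[OF f])
  then show "homogeneous_extension K d f x = homogeneous_extension K d f y"
    by (simp add: homogeneous_extension_def)
qed

lemma homogeneous_extension_nonneg: "(\<And>z. 0 \<le> f z) \<Longrightarrow> 0 \<le> homogeneous_extension K d f z"
  by (simp add: homogeneous_extension_def)

lemma homogeneous_on_orthant_homogeneous_extension:
  assumes "homogeneous_on_orthant K e f"
  shows "homogeneous_on_orthant K (e - d) (homogeneous_extension K d f)"
  unfolding homogeneous_on_orthant_def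
proof (intro ballI allI impI)
  fix z and t :: real assume z: "z \<in> orthant K" and t: "0 < t"
  then have tz: "(\<lambda>i. t * z i) \<in> orthant K"
    by (simp add: orthant_def)
  have "0 \<le> (\<Sum>j<K. z j)"
    using z by (auto simp: orthant_def intro: sum_nonneg less_imp_le)
  then have "(\<Sum>j<K. t * z j) powr d = t powr d * (\<Sum>j<K. z j) powr d"
    using t by (simp add: sum_distrib_left[symmetric] powr_mult)
  then show "homogeneous_extension K d f (\<lambda>i. t * z i) = t powr (e - d) * homogeneous_extension K d f z"
    using z tz t homogeneous_on_orthantD[OF assms z t]
    by (simp add: homogeneous_extension_def powr_diff)
qed

lemma simplex_nn_integral_homogeneous_extension:
  assumes "\<And>x. \<forall>i<Suc m. 0 \<le> x i \<Longrightarrow> x \<notin> orthant (Suc m) \<Longrightarrow> f x = 0"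
  shows "simplex_nn_integral (Suc m) (homogeneous_extension (Suc m) d f) = simplex_nn_integral (Suc m) f"
  using assms by (intro simplex_nn_integral_cong) (auto simp: homogeneous_extension_def)

definition I_integrand :: "nat \<Rightarrow> real \<Rightarrow> real \<Rightarrow> (nat \<Rightarrow> real) \<Rightarrow> (nat \<Rightarrow> real) \<Rightarrow> (nat \<Rightarrow> real) \<Rightarrow> real"
  where "I_integrand K \<sigma> n \<alpha> \<gamma> y = (\<Sum>k<K. \<gamma> k * y k powr \<sigma>) powr n * (\<Prod>i<K. y i powr (\<alpha> i - 1))"

definition rescaled_integrand :: "nat \<Rightarrow> real \<Rightarrow> real \<Rightarrow> (nat \<Rightarrow> real) \<Rightarrow> (nat \<Rightarrow> real) \<Rightarrow>
    real \<Rightarrow> (nat \<Rightarrow> real) \<Rightarrow> (nat \<Rightarrow> real) \<Rightarrow> real" where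
  "rescaled_integrand K \<sigma> n \<alpha> \<gamma> \<tau> \<beta> x =
    (\<Sum>k<K. \<beta> k powr \<sigma> * \<gamma> k * x k powr (\<sigma> * \<tau>)) powr n * (\<Prod>i<K. x i powr (\<tau> * \<alpha> i - 1))
      / (\<Sum>j<K. \<beta> j * x j powr \<tau>) powr ((\<Sum>i<K. \<alpha> i) + \<sigma> * n)"

lemma I_int_eq_simplex_integral: "I_int K \<sigma> n \<alpha> \<gamma> = simplex_integral K (I_integrand K \<sigma> n \<alpha> \<gamma>)"
  unfolding I_int_def I_integrand_def ..

lemma I_integrand_measurable[measurable]:
  "I_integrand K \<sigma> n \<alpha> \<gamma> \<in> borel_measurable (PiM {..<K} (\<lambda>_. lborel))"
  unfolding I_integrand_def by measurable

lemma rescaled_integrand_measurable[measurable]: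
  "rescaled_integrand K \<sigma> n \<alpha> \<gamma> \<tau> \<beta> \<in> borel_measurable (PiM {..<K} (\<lambda>_. lborel))"
  unfolding rescaled_integrand_def by measurable

lemma depends_on_first_I_integrand: "depends_on_first K (I_integrand K \<sigma> n \<alpha> \<gamma>)"
  unfolding depends_on_first_def
proof (intro allI impI)
  fix x y :: "nat \<Rightarrow> real" assume "\<forall>i<K. x i = y i"
  then have "(\<Sum>k<K. \<gamma> k * x k powr \<sigma>) = (\<Sum>k<K. \<gamma> k * y k powr \<sigma>)"
    "(\<Prod>i<K. x i powr (\<alpha> i - 1)) = (\<Prod>i<K. y i powr (\<alpha> i - 1))"
    by (auto intro: sum.cong prod.cong)
  then show "I_integrand K \<sigma> n \<alpha> \<gamma> x = I_integrand K \<sigma> n \<alpha> \<gamma> y"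
    by (simp add: I_integrand_def)
qed

lemma depends_on_first_rescaled_integrand: "depends_on_first K (rescaled_integrand K \<sigma> n \<alpha> \<gamma> \<tau> \<beta>)"
  unfolding depends_on_first_def
proof (intro allI impI)
  fix x y :: "nat \<Rightarrow> real" assume "\<forall>i<K. x i = y i"
  then have "(\<Sum>k<K. \<beta> k powr \<sigma> * \<gamma> k * x k powr (\<sigma> * \<tau>)) = (\<Sum>k<K. \<beta> k powr \<sigma> * \<gamma> k * y k powr (\<sigma> * \<tau>))"
    "(\<Prod>i<K. x i powr (\<tau> * \<alpha> i - 1)) = (\<Prod>i<K. y i powr (\<tau> * \<alpha> i - 1))"
    "(\<Sum>j<K. \<beta> j * x j powr \<tau>) = (\<Sum>j<K. \<beta> j * y j powr \<tau>)"
    by (auto intro: sum.cong prod.cong)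
  then show "rescaled_integrand K \<sigma> n \<alpha> \<gamma> \<tau> \<beta> x = rescaled_integrand K \<sigma> n \<alpha> \<gamma> \<tau> \<beta> y"
    by (simp add: rescaled_integrand_def)
qed

lemma I_integrand_nonneg: "0 \<le> I_integrand K \<sigma> n \<alpha> \<gamma> y"
  unfolding I_integrand_def by (intro mult_nonneg_nonneg prod_nonneg) auto

lemma rescaled_integrand_nonneg: "0 \<le> rescaled_integrand K \<sigma> n \<alpha> \<gamma> \<tau> \<beta> x"
  unfolding rescaled_integrand_def by (intro divide_nonneg_nonneg mult_nonneg_nonneg prod_nonneg) auto

text \<open>Since \<open>0 powr a = 0\<close>, both integrands vanish on the boundary of the orthant, whatever
  the exponents.\<close>

lemma I_integrand_boundary: "j < K \<Longrightarrow> y j = 0 \<Longrightarrow> I_integrand K \<sigma> n \<alpha> \<gamma> y = 0"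
  unfolding I_integrand_def by (auto intro: prod_zero)

lemma rescaled_integrand_boundary: "j < K \<Longrightarrow> x j = 0 \<Longrightarrow> rescaled_integrand K \<sigma> n \<alpha> \<gamma> \<tau> \<beta> x = 0"
  unfolding rescaled_integrand_def by (auto intro: prod_zero)

lemma homogeneous_on_orthant_I_integrand:
  assumes \<gamma>: "\<And>k. k < K \<Longrightarrow> 0 \<le> \<gamma> k"
  shows "homogeneous_on_orthant K (\<sigma> * n + (\<Sum>i<K. \<alpha> i) - real K) (I_integrand K \<sigma> n \<alpha> \<gamma>)"
  unfolding homogeneous_on_orthant_def
proof (intro ballI allI impI)
  fix z and t :: real assume z: "z \<in> orthant K" and t: "0 < t"
  then have z_pos: "0 < z i" if "i < K" for i
    using that by (simp add: orthant_def)
  define S where "S = (\<Sum>k<K. \<gamma> k * z k powr \<sigma>)"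
  have S_nonneg: "0 \<le> S"
    unfolding S_def using \<gamma> by (intro sum_nonneg mult_nonneg_nonneg) auto
  have "(\<Sum>k<K. \<gamma> k * (t * z k) powr \<sigma>) = t powr \<sigma> * S"
    unfolding S_def sum_distrib_left using t z_pos by (intro sum.cong) (auto simp: powr_mult)
  then have sum_part: "(\<Sum>k<K. \<gamma> k * (t * z k) powr \<sigma>) powr n = t powr (\<sigma> * n) * S powr n"
    using t S_nonneg by (simp add: powr_mult powr_powr)
  have "(\<Prod>i<K. (t * z i) powr (\<alpha> i - 1)) = (\<Prod>i<K. t powr (\<alpha> i - 1) * z i powr (\<alpha> i - 1))"
    using t z_pos by (intro prod.cong) (auto simp: powr_mult)
  also have "\<dots> = t powr (\<Sum>i<K. \<alpha> i - 1) * (\<Prod>i<K. z i powr (\<alpha> i - 1))"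
    using t by (simp add: prod.distrib powr_sum)
  also have "(\<Sum>i<K. \<alpha> i - 1) = (\<Sum>i<K. \<alpha> i) - real K"
    by (simp add: sum_subtractf)
  finally have prod_part: "(\<Prod>i<K. (t * z i) powr (\<alpha> i - 1)) =
      t powr ((\<Sum>i<K. \<alpha> i) - real K) * (\<Prod>i<K. z i powr (\<alpha> i - 1))" .
  show "I_integrand K \<sigma> n \<alpha> \<gamma> (\<lambda>i. t * z i) = t powr (\<sigma> * n + (\<Sum>i<K. \<alpha> i) - real K) * I_integrand K \<sigma> n \<alpha> \<gamma> z"
    unfolding I_integrand_def sum_part prod_part S_def[symmetric]
    by (simp add: powr_add[symmetric] ac_simps add_diff_eq)
qed

lemma I_integrand_powr_substitution:
  assumes x: "\<forall>i<K. 0 \<le> x i" and \<beta>: "\<And>i. i < K \<Longrightarrow> 0 < \<beta> i"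
  shows "homogeneous_extension K ((\<Sum>i<K. \<alpha> i) + \<sigma> * n) (I_integrand K \<sigma> n \<alpha> \<gamma>) (\<lambda>i. \<beta> i * x i powr \<tau>) *
      (\<Prod>i<K. \<beta> i * \<tau> * x i powr (\<tau> - 1)) =
    \<tau> ^ K * (\<Prod>i<K. \<beta> i powr \<alpha> i) * rescaled_integrand K \<sigma> n \<alpha> \<gamma> \<tau> \<beta> x"
proof (cases "x \<in> orthant K")
  case False
  then obtain j where "j < K" "x j = 0"
    using x orthant_boundary by blast
  then have "(\<lambda>i. \<beta> i * x i powr \<tau>) \<notin> orthant K"
    by (auto simp: orthant_def)
  then show ?thesis
    using rescaled_integrand_boundary[of j K x] \<open>j < K\<close> \<open>x j = 0\<close>
    by (simp add: homogeneous_extension_def)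
next
  case True
  have x_pos: "0 < x i" if "i < K" for i
    using True that by (simp add: orthant_def)
  have \<psi>: "(\<lambda>i. \<beta> i * x i powr \<tau>) \<in> orthant K"
    using x_pos \<beta> by (auto simp: orthant_def less_imp_neq[symmetric] intro!: mult_pos_pos)
  have sum_eq: "(\<Sum>k<K. \<gamma> k * (\<beta> k * x k powr \<tau>) powr \<sigma>) = (\<Sum>k<K. \<beta> k powr \<sigma> * \<gamma> k * x k powr (\<sigma> * \<tau>))"
    using x_pos \<beta> by (intro sum.cong) (auto simp: powr_mult powr_powr ac_simps)
  have "(\<Prod>i<K. (\<beta> i * x i powr \<tau>) powr (\<alpha> i - 1)) * (\<Prod>i<K. \<beta> i * \<tau> * x i powr (\<tau> - 1)) =
      (\<Prod>i<K. \<tau> * (\<beta> i powr \<alpha> i * x i powr (\<tau> * \<alpha> i - 1)))"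
    unfolding prod.distrib[symmetric]
  proof (rule prod.cong[OF refl])
    fix i assume "i \<in> {..<K}"
    then have xi: "0 < x i" and bi: "0 < \<beta> i"
      using x_pos \<beta> by auto
    have "(\<beta> i * x i powr \<tau>) powr (\<alpha> i - 1) * (\<beta> i * \<tau> * x i powr (\<tau> - 1)) =
        \<tau> * ((\<beta> i powr (\<alpha> i - 1) * \<beta> i) * (x i powr (\<tau> * (\<alpha> i - 1)) * x i powr (\<tau> - 1)))"
      using xi bi by (simp add: powr_mult powr_powr ac_simps)
    also have "\<beta> i powr (\<alpha> i - 1) * \<beta> i = \<beta> i powr \<alpha> i"
      using bi by (simp add: powr_diff)
    also have "x i powr (\<tau> * (\<alpha> i - 1)) * x i powr (\<tau> - 1) = x i powr (\<tau> * \<alpha> i - 1)"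
      using xi by (simp add: powr_add[symmetric] algebra_simps)
    finally show "(\<beta> i * x i powr \<tau>) powr (\<alpha> i - 1) * (\<beta> i * \<tau> * x i powr (\<tau> - 1)) =
        \<tau> * (\<beta> i powr \<alpha> i * x i powr (\<tau> * \<alpha> i - 1))" .
  qed
  also have "\<dots> = \<tau> ^ K * (\<Prod>i<K. \<beta> i powr \<alpha> i) * (\<Prod>i<K. x i powr (\<tau> * \<alpha> i - 1))"
    by (simp add: prod.distrib)
  finally show ?thesis
    using \<psi> unfolding homogeneous_extension_def I_integrand_def rescaled_integrand_def sum_eq
    by (simp add: ac_simps)
qed

lemma I_int_eq_rescaled:
  assumes \<gamma>: "\<And>i. i < Suc m \<Longrightarrow> 0 \<le> \<gamma> i" and \<tau>: "0 < \<tau>" and \<beta>: "\<And>i. i < Suc m \<Longrightarrow> 0 < \<beta> i"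
  shows "I_int (Suc m) \<sigma> n \<alpha> \<gamma> =
    \<tau> ^ m * (\<Prod>l<Suc m. \<beta> l powr \<alpha> l) * simplex_integral (Suc m) (rescaled_integrand (Suc m) \<sigma> n \<alpha> \<gamma> \<tau> \<beta>)"
proof -
  let ?I = "I_integrand (Suc m) \<sigma> n \<alpha> \<gamma>" and ?R = "rescaled_integrand (Suc m) \<sigma> n \<alpha> \<gamma> \<tau> \<beta>"
  define F where "F = homogeneous_extension (Suc m) ((\<Sum>i<Suc m. \<alpha> i) + \<sigma> * n) ?I"
  define C where "C = \<tau> ^ m * (\<Prod>l<Suc m. \<beta> l powr \<alpha> l)"
  have C_nonneg: "0 \<le> C"
    unfolding C_def using \<tau> by (intro mult_nonneg_nonneg prod_nonneg) auto
  have I_meas: "(\<lambda>y. ?I (simplex_pt (Suc m) y)) \<in> borel_measurable (PiM {..<m} (\<lambda>_. lborel))"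
    and R_meas: "(\<lambda>y. ?R (simplex_pt (Suc m) y)) \<in> borel_measurable (PiM {..<m} (\<lambda>_. lborel))"
    by (intro measurable_comp_simplex_pt I_integrand_measurable rescaled_integrand_measurable
        depends_on_first_I_integrand depends_on_first_rescaled_integrand)+
  have [measurable]: "F \<in> borel_measurable (PiM {..<Suc m} (\<lambda>_. lborel))"
    unfolding F_def by (intro homogeneous_extension_measurable) measurable
  have F_hom: "homogeneous_on_orthant (Suc m) (- real (Suc m)) F"
  proof -
    have "homogeneous_on_orthant (Suc m)
        (\<sigma> * n + (\<Sum>i<Suc m. \<alpha> i) - real (Suc m) - ((\<Sum>i<Suc m. \<alpha> i) + \<sigma> * n)) F"
      unfolding F_def using \<gamma>
      by (intro homogeneous_on_orthant_homogeneous_extension homogeneous_on_orthant_I_integrand)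
    moreover have "\<sigma> * n + (\<Sum>i<Suc m. \<alpha> i) - real (Suc m) - ((\<Sum>i<Suc m. \<alpha> i) + \<sigma> * n) = - real (Suc m)"
      by simp
    ultimately show ?thesis by (simp only:)
  qed
  have "ennreal \<tau> * simplex_nn_integral (Suc m) ?I = ennreal \<tau> * simplex_nn_integral (Suc m) F"
    unfolding F_def using orthant_boundary I_integrand_boundary
    by (subst simplex_nn_integral_homogeneous_extension) blast+
  also have "\<dots> =
      simplex_nn_integral (Suc m) (\<lambda>x. F (\<lambda>i. \<beta> i * x i powr \<tau>) * (\<Prod>i<Suc m. \<beta> i * \<tau> * x i powr (\<tau> - 1)))"
  proof (rule simplex_nn_integral_powr_substitution)
    show "depends_on_first (Suc m) F"
      unfolding F_def by (intro depends_on_first_homogeneous_extension depends_on_first_I_integrand)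
    show "F z = 0" if "z \<notin> orthant (Suc m)" for z
      using that by (simp add: F_def homogeneous_extension_def)
    show "0 \<le> F z" for z
      unfolding F_def by (intro homogeneous_extension_nonneg I_integrand_nonneg)
  qed (use F_hom \<tau> \<beta> in auto)
  also have "\<dots> = simplex_nn_integral (Suc m) (\<lambda>x. (\<tau> * C) * ?R x)"
  proof (rule simplex_nn_integral_cong)
    fix x :: "nat \<Rightarrow> real" assume "\<forall>i<Suc m. 0 \<le> x i"
    from I_integrand_powr_substitution[of "Suc m" x \<beta>, OF this \<beta>]
    show "F (\<lambda>i. \<beta> i * x i powr \<tau>) * (\<Prod>i<Suc m. \<beta> i * \<tau> * x i powr (\<tau> - 1)) = (\<tau> * C) * ?R x"
      by (simp only: F_def C_def power_Suc mult.assoc)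
  qed
  also have "\<dots> = ennreal \<tau> * (ennreal C * simplex_nn_integral (Suc m) ?R)"
    using \<tau> C_nonneg by (subst simplex_nn_integral_cmult[OF _ R_meas]) (simp_all add: ennreal_mult mult.assoc)
  finally have "simplex_nn_integral (Suc m) ?I = ennreal C * simplex_nn_integral (Suc m) ?R"
    using \<tau> by (simp add: ennreal_mult_cancel_left)
  then have "enn2real (simplex_nn_integral (Suc m) ?I) = C * enn2real (simplex_nn_integral (Suc m) ?R)"
    using C_nonneg by (simp add: enn2real_mult)
  then show ?thesis
    unfolding I_int_eq_simplex_integral C_def
    using simplex_integral_eq_simplex_nn_integral[OF I_meas I_integrand_nonneg]
      simplex_integral_eq_simplex_nn_integral[OF R_meas rescaled_integrand_nonneg]
    by simp
qed

lemma I_int_eq_power_form: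
  assumes \<sigma>: "0 < \<sigma>" and \<gamma>: "\<And>i. i < Suc m \<Longrightarrow> 0 < \<gamma> i"
  shows "I_int (Suc m) \<sigma> n \<alpha> \<gamma> =
    1 / (\<sigma> ^ m * (\<Prod>l<Suc m. \<gamma> l powr (\<alpha> l / \<sigma>))) *
    simplex_integral (Suc m) (\<lambda>x. (\<Prod>i<Suc m. x i powr (\<alpha> i / \<sigma> - 1))
      / (\<Sum>j<Suc m. x j powr (1 / \<sigma>) / \<gamma> j powr (1 / \<sigma>)) powr ((\<Sum>i<Suc m. \<alpha> i) + \<sigma> * n))"
proof -
  \<comment> \<open>The choice \<tau> = 1/\<sigma>, \<beta>_i = \<gamma>_i^(-1/\<sigma>) removes \<gamma> from the numerator.\<close>
  define \<beta> where "\<beta> i = \<gamma> i powr (- (1 / \<sigma>))" for i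
  have "I_int (Suc m) \<sigma> n \<alpha> \<gamma> = (1 / \<sigma>) ^ m * (\<Prod>l<Suc m. \<beta> l powr \<alpha> l) *
      simplex_integral (Suc m) (rescaled_integrand (Suc m) \<sigma> n \<alpha> \<gamma> (1 / \<sigma>) \<beta>)"
  proof (rule I_int_eq_rescaled)
    fix i assume "i < Suc m"
    then show "0 \<le> \<gamma> i" "0 < \<beta> i"
      using \<gamma>[of i] by (simp_all add: \<beta>_def)
  qed (use \<sigma> in simp)
  also have "(\<Prod>l<Suc m. \<beta> l powr \<alpha> l) = inverse (\<Prod>l<Suc m. \<gamma> l powr (\<alpha> l / \<sigma>))"
  proof -
    have "\<beta> l powr \<alpha> l = inverse (\<gamma> l powr (\<alpha> l / \<sigma>))" for l
      by (simp add: \<beta>_def powr_powr powr_minus[symmetric])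
    then show ?thesis
      using prod_inversef[of "\<lambda>l. \<gamma> l powr (\<alpha> l / \<sigma>)" "{..<Suc m}"] by (simp add: comp_def)
  qed
  also have "simplex_integral (Suc m) (rescaled_integrand (Suc m) \<sigma> n \<alpha> \<gamma> (1 / \<sigma>) \<beta>) =
      simplex_integral (Suc m) (\<lambda>x. (\<Prod>i<Suc m. x i powr (\<alpha> i / \<sigma> - 1))
        / (\<Sum>j<Suc m. x j powr (1 / \<sigma>) / \<gamma> j powr (1 / \<sigma>)) powr ((\<Sum>i<Suc m. \<alpha> i) + \<sigma> * n))"
  proof (rule simplex_integral_cong)
    fix x :: "nat \<Rightarrow> real" assume x: "\<forall>i<Suc m. 0 \<le> x i" and sum_x: "(\<Sum>i<Suc m. x i) = 1"
    have "\<beta> k powr \<sigma> * \<gamma> k = 1" if "k < Suc m" for k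
    proof -
      have "\<beta> k powr \<sigma> = \<gamma> k powr (- 1)"
        using \<sigma> by (simp add: \<beta>_def powr_powr)
      then show ?thesis
        using \<gamma>[OF that] by (simp add: powr_minus)
    qed
    then have "(\<Sum>k<Suc m. \<beta> k powr \<sigma> * \<gamma> k * x k powr (\<sigma> * (1 / \<sigma>))) = (\<Sum>k<Suc m. x k)"
      using \<sigma> x by (intro sum.cong) auto
    moreover have "(\<Sum>j<Suc m. \<beta> j * x j powr (1 / \<sigma>)) = (\<Sum>j<Suc m. x j powr (1 / \<sigma>) / \<gamma> j powr (1 / \<sigma>))"
      by (intro sum.cong) (simp_all add: \<beta>_def powr_minus divide_inverse)
    moreover have "(\<Prod>i<Suc m. x i powr (1 / \<sigma> * \<alpha> i - 1)) = (\<Prod>i<Suc m. x i powr (\<alpha> i / \<sigma> - 1))"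
      by (intro prod.cong) simp_all
    ultimately show "rescaled_integrand (Suc m) \<sigma> n \<alpha> \<gamma> (1 / \<sigma>) \<beta> x =
        (\<Prod>i<Suc m. x i powr (\<alpha> i / \<sigma> - 1))
          / (\<Sum>j<Suc m. x j powr (1 / \<sigma>) / \<gamma> j powr (1 / \<sigma>)) powr ((\<Sum>i<Suc m. \<alpha> i) + \<sigma> * n)"
      unfolding rescaled_integrand_def sum_x by simp
  qed
  finally show ?thesis
    by (simp add: divide_inverse power_inverse inverse_mult_distrib ac_simps)
qed

theorem mainTheorem2:
  fixes K :: nat and n \<sigma> :: real and \<alpha> \<gamma> :: "nat \<Rightarrow> real"
  assumes "K \<ge> 2" and "\<sigma> > 0"
    and "\<forall>i<K. \<alpha> i > 0" and "\<forall>i<K. \<gamma> i > 0"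
  shows "(\<forall>(\<tau>::real) (\<beta>::nat \<Rightarrow> real). \<tau> > 0 \<and> (\<forall>i<K. \<beta> i > 0) \<longrightarrow>
            I_int K \<sigma> n \<alpha> \<gamma> =
              \<tau> ^ (K - 1) * (\<Prod>l<K. \<beta> l powr \<alpha> l) *
              simplex_integral K (\<lambda>x.
                 (\<Sum>k<K. \<beta> k powr \<sigma> * \<gamma> k * x k powr (\<sigma> * \<tau>)) powr n
                 * (\<Prod>i<K. x i powr (\<tau> * \<alpha> i - 1))
                 / (\<Sum>j<K. \<beta> j * x j powr \<tau>) powr ((\<Sum>i<K. \<alpha> i) + \<sigma> * n)))
       \<and> I_int K \<sigma> n \<alpha> \<gamma> =
           1 / (\<sigma> ^ (K - 1) * (\<Prod>l<K. \<gamma> l powr (\<alpha> l / \<sigma>))) *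
           simplex_integral K (\<lambda>x.
              (\<Prod>i<K. x i powr (\<alpha> i / \<sigma> - 1))
              / (\<Sum>j<K. x j powr (1 / \<sigma>) / \<gamma> j powr (1 / \<sigma>)) powr ((\<Sum>i<K. \<alpha> i) + \<sigma> * n))"
proof -
  obtain m where K: "K = Suc m"
    using assms(1) by (cases K) auto
  have \<gamma>: "\<And>i. i < Suc m \<Longrightarrow> 0 < \<gamma> i"
    using assms(4) K by auto
  have "I_int (Suc m) \<sigma> n \<alpha> \<gamma> =
      \<tau> ^ m * (\<Prod>l<Suc m. \<beta> l powr \<alpha> l) * simplex_integral (Suc m) (rescaled_integrand (Suc m) \<sigma> n \<alpha> \<gamma> \<tau> \<beta>)"
    if "\<tau> > 0 \<and> (\<forall>i<Suc m. \<beta> i > 0)" for \<tau> \<beta>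
    using that \<gamma> by (intro I_int_eq_rescaled) (auto intro: less_imp_le)
  then show ?thesis
    using I_int_eq_power_form[where m=m and \<gamma>=\<gamma>, OF assms(2) \<gamma>]
    unfolding K diff_Suc_1 rescaled_integrand_def[abs_def] by blast
qed

end
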